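(* Let $n$ be even and $1\le k\le n/2$, and define $$\mathcal C_4(n,k)=\{0^k1\vec c1:\ \vec c\in\{0,1\}^{n-k-2},\ w_H(\vec c)=\tfrac n2-2,\ \vec c\text{ has no run of }k\text{ consecutive zeros}\}.$$ Then $\mathcal C_4(n,k)$ is a balanced MU code. Moreover, for a fixed integer $a\ge1$, as $n\to\infty$ over powers of $2$, $$\liminf_{n\to\infty}\ \frac{|\mathcal C_4(n,\log_2 n+a)|}{\frac{2^n}{n\sqrt n}}\ \ge\ \frac{2^a-1}{2^{2a+1}\sqrt{2\pi}}.$$
   Context: Binary alphabet; $w_H$ is Hamming weight. A binary word of even length $n$ is balanced if its Hamming weight is $n/2$. A code $\mathcal C\subseteq\{0,1\}^n$ is mutually uncorrelated (MU) if for any two not necessarily distinct codewords $\vec a,\vec b$, no proper nonempty prefix of $\vec a$ equals a suffix of $\vec b$ of the same length; a balanced MU code is an MU code whose codewords are all balanced. *)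

theory Defs
  imports "HOL-Library.Extended_Real" Complex_Main
begin

text \<open>Binary words are bool lists: False = 0, True = 1.\<close>

definition hw :: "bool list \<Rightarrow> nat" where
  "hw w = length (filter id w)"

definition balanced :: "bool list \<Rightarrow> bool" where
  "balanced w \<longleftrightarrow> even (length w) \<and> 2 * hw w = length w"

definition MU :: "nat \<Rightarrow> bool list set \<Rightarrow> bool" where
  "MU n C \<longleftrightarrow> (\<forall>w\<in>C. length w = n) \<and>
     (\<forall>a\<in>C. \<forall>b\<in>C. \<forall>i. 0 < i \<and> i < n \<longrightarrow> take i a \<noteq> drop (n - i) b)"

definition balanced_MU :: "nat \<Rightarrow> bool list set \<Rightarrow> bool" where
  "balanced_MU n C \<longleftrightarrow> MU n C \<and> (\<forall>w\<in>C. balanced w)"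

definition no_zero_run :: "nat \<Rightarrow> bool list \<Rightarrow> bool" where
  "no_zero_run k c \<longleftrightarrow> \<not> (\<exists>u v. c = u @ replicate k False @ v)"

definition C4 :: "nat \<Rightarrow> nat \<Rightarrow> bool list set" where
  "C4 n k = {replicate k False @ [True] @ c @ [True] | c.
       k + length c + 2 = n \<and> hw c + 2 = n div 2 \<and> no_zero_run k c}"

end

theory Submission
  imports Defs "HOL-Analysis.Analysis" "HOL-Real_Asymp.Real_Asymp"
begin

text \<open>A word of \<open>C4 n k\<close> begins with a block of \<open>k\<close> zeros, which is its only occurrence of
  \<open>0\<^sup>k\<close>, and ends with a one. Hence a prefix of length \<open>i \<le> k\<close> (all zeros) never equals a
  suffix (ending in a one), and for \<open>i > k\<close> the overlap would produce a second block of \<open>k\<close> zeros.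

  For the size, the words of length \<open>L = n - k - 2\<close> and weight \<open>w = n/2 - 2\<close> carrying a zero
  block at a given position number at most \<open>C(L-k, w) \<le> 2\<^sup>-\<^sup>k C(L, w)\<close>, and there are fewer
  than \<open>n\<close> positions; for \<open>n = 2\<^sup>m\<close>, \<open>k = m + a\<close> the union bound costs only a factor
  \<open>1 - 2\<^sup>-\<^sup>a\<close>. Writing \<open>C(L, w) = C(2z + d, z)\<close> with \<open>d = k - 2 = O(log n)\<close>, this is at least
  \<open>2\<^sup>d C(2z, z) (1 - o(1))\<close>, and \<open>C(2z, z) \<sim> 4\<^sup>z / \<surd>(\<pi> z)\<close>.\<close>

lemma hw_Nil [simp]: "hw [] = 0"
  by (simp add: hw_def)

lemma hw_Cons [simp]: "hw (x # c) = (if x then 1 else 0) + hw c"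
  by (simp add: hw_def)

lemma hw_append [simp]: "hw (u @ v) = hw u + hw v"
  by (simp add: hw_def)

lemma hw_replicate_False [simp]: "hw (replicate k False) = 0"
  by (simp add: hw_def)

section \<open>Mutual uncorrelation\<close>

lemma no_zero_run_snoc_True:
  assumes "no_zero_run k c" "0 < k"
  shows "no_zero_run k (c @ [True])"
  unfolding no_zero_run_def
proof
  assume "\<exists>u v. c @ [True] = u @ replicate k False @ v"
  then obtain u v where uv: "c @ [True] = u @ replicate k False @ v"
    by blast
  have "v \<noteq> []"
    using arg_cong[OF uv, of last] assms(2) by auto
  then have "c = u @ replicate k False @ butlast v"
    using arg_cong[OF uv, of butlast] by (simp add: butlast_append)
  then show False
    using assms(1) unfolding no_zero_run_def by blast
qed

lemma zero_block_only_at_start: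
  assumes "no_zero_run k d" "0 < k"
    and "replicate k False @ True # d = u @ replicate k False @ v"
  shows "u = []"
proof (rule ccontr)
  assume "u \<noteq> []"
  show False
  proof (cases "length u \<le> k")
    case True
    have "(replicate k False @ True # d) ! k = True"
      by (simp add: nth_append)
    moreover have "k - length u < k"
      using \<open>u \<noteq> []\<close> assms(2) by simp
    then have "(u @ replicate k False @ v) ! k = False"
      using True by (simp add: nth_append)
    ultimately show False
      using assms(3) by simp
  next
    case False
    then have "d = drop (Suc k) u @ replicate k False @ v"
      using arg_cong[OF assms(3), of "drop (Suc k)"] by simp
    then show False
      using assms(1) unfolding no_zero_run_def by blast
  qed
qed

lemma C4E:
  assumes "w \<in> C4 n k"
  obtains c where "w = replicate k False @ True # c @ [True]" "length w = n" "no_zero_run k c"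
  using assms by (auto simp: C4_def)

lemma MU_C4:
  assumes "1 \<le> k"
  shows "MU n (C4 n k)"
  unfolding MU_def
proof (intro conjI ballI allI impI)
  fix w assume "w \<in> C4 n k"
  then show "length w = n"
    by (rule C4E)
next
  fix a b i assume a: "a \<in> C4 n k" and b: "b \<in> C4 n k" and i: "0 < i \<and> i < n"
  have k_pos: "0 < k"
    using assms by simp
  obtain c where a_eq: "a = replicate k False @ True # c @ [True]"
    using a by (rule C4E)
  obtain d where b_eq: "b = replicate k False @ True # d @ [True]"
    and b_len: "length b = n" and d: "no_zero_run k d"
    using b by (rule C4E)
  show "take i a \<noteq> drop (n - i) b"
  proof
    assume eq: "take i a = drop (n - i) b"
    show False
    proof (cases "i \<le> k")
      case True
      have "n - i < length b"
        using i b_len by simp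
      then have "last b \<in> set (drop (n - i) b)"
        by (metis last_drop last_in_set drop_eq_Nil not_le)
      moreover have "last b = True"
        by (simp add: b_eq)
      moreover have "take i a = replicate i False"
        using True by (simp add: a_eq)
      ultimately show False
        using eq by simp
    next
      case False
      define r where "r = take (i - k) (True # c @ [True])"
      have "drop (n - i) b = replicate k False @ r"
        using eq False by (simp add: a_eq r_def take_append min_def)
      then have "b = take (n - i) b @ replicate k False @ r"
        by (metis append_take_drop_id)
      then have "replicate k False @ True # (d @ [True]) = take (n - i) b @ replicate k False @ r"
        by (simp only: b_eq[symmetric])
      then have "take (n - i) b = []"
        by (rule zero_block_only_at_start[OF no_zero_run_snoc_True[OF d k_pos] k_pos])
      then show False
        using i b_len by simp
    qed
  qed
qed

lemma balanced_C4:
  assumes "even n" "w \<in> C4 n k"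
  shows "balanced w"
  using assms by (auto simp: C4_def balanced_def)

section \<open>Counting words without long zero runs\<close>

lemma hw_eq_card: "hw c = card {i. i < length c \<and> c ! i}"
  by (simp add: hw_def length_filter_conv_card)

lemma finite_words_of_length: "finite {c :: bool list. length c = L \<and> P c}"
  by (rule finite_subset[OF _ finite_lists_length_eq[of UNIV L]]) auto

lemma card_words_of_weight: "card {c :: bool list. length c = L \<and> hw c = w} = L choose w"
proof -
  define word where "word B = map (\<lambda>i. i \<in> B) [0..<L]" for B :: "nat set"
  let ?S = "{B. B \<subseteq> {0..<L} \<and> card B = w}"
  have "{c. length c = L \<and> hw c = w} = word ` ?S"
  proof (intro equalityI subsetI)
    fix c :: "bool list" assume c: "c \<in> {c. length c = L \<and> hw c = w}"
    then have "c = word {i. i < L \<and> c ! i}"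
      by (intro nth_equalityI) (auto simp: word_def)
    then show "c \<in> word ` ?S"
      using c by (auto simp: hw_eq_card)
  next
    fix c assume "c \<in> word ` ?S"
    then obtain B where "B \<subseteq> {0..<L}" "card B = w" "c = word B"
      by blast
    moreover from this(1) have "{i. i < L \<and> word B ! i} = B"
      by (auto simp: word_def)
    ultimately show "c \<in> {c. length c = L \<and> hw c = w}"
      by (simp add: word_def hw_eq_card)
  qed
  moreover have "inj_on word ?S"
    by (rule inj_onI) (auto simp: word_def list_eq_iff_nth_eq subset_iff)
  ultimately show ?thesis
    by (simp add: card_image n_subsets)
qed

lemma no_zero_run_iff:
  "no_zero_run k c \<longleftrightarrow> (\<forall>j. j + k \<le> length c \<longrightarrow> take k (drop j c) \<noteq> replicate k False)"
proof
  assume "no_zero_run k c"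
  then show "\<forall>j. j + k \<le> length c \<longrightarrow> take k (drop j c) \<noteq> replicate k False"
    unfolding no_zero_run_def by (metis append_take_drop_id)
next
  assume "\<forall>j. j + k \<le> length c \<longrightarrow> take k (drop j c) \<noteq> replicate k False"
  then show "no_zero_run k c"
    unfolding no_zero_run_def by (metis append_assoc append_eq_conv_conj length_append le_add1
      length_replicate)
qed

lemma card_zero_run_at_le:
  assumes "j + k \<le> L"
  shows "card {c :: bool list. length c = L \<and> hw c = w \<and> take k (drop j c) = replicate k False}
         \<le> (L - k) choose w"
proof -
  let ?B = "{c :: bool list. length c = L \<and> hw c = w \<and> take k (drop j c) = replicate k False}"
  define cut where "cut c = take j c @ drop (j + k) c" for c :: "bool list"
  have split: "take j c @ take k (drop j c) @ drop (j + k) c = c" for c :: "bool list"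
    by (metis append_take_drop_id drop_drop add.commute)
  have inj: "inj_on cut ?B"
  proof (rule inj_onI)
    fix x y assume x: "x \<in> ?B" and y: "y \<in> ?B" and "cut x = cut y"
    with assms have "take j x = take j y" "drop (j + k) x = drop (j + k) y"
      by (auto simp: cut_def append_eq_append_conv)
    moreover from x y have "take k (drop j x) = take k (drop j y)"
      by simp
    ultimately show "x = y"
      using split[of x] split[of y] by metis
  qed
  have sub: "cut ` ?B \<subseteq> {c. length c = L - k \<and> hw c = w}"
  proof (rule image_subsetI)
    fix c assume c: "c \<in> ?B"
    have "hw (cut c) = hw c"
      using c arg_cong[OF split[of c], of hw] by (simp add: cut_def)
    with c assms show "cut c \<in> {c. length c = L - k \<and> hw c = w}"
      by (simp add: cut_def)
  qed
  have "card ?B = card (cut ` ?B)"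
    using inj by (simp add: card_image)
  also have "\<dots> \<le> card {c :: bool list. length c = L - k \<and> hw c = w}"
    by (rule card_mono[OF finite_words_of_length sub])
  finally show ?thesis
    by (simp add: card_words_of_weight)
qed

lemma card_no_zero_run_ge:
  assumes "k \<le> L"
  shows "(L choose w) - (L - k + 1) * ((L - k) choose w)
         \<le> card {c :: bool list. length c = L \<and> hw c = w \<and> no_zero_run k c}"
proof -
  let ?A = "{c :: bool list. length c = L \<and> hw c = w}"
  let ?B = "\<lambda>j. {c :: bool list. length c = L \<and> hw c = w \<and> take k (drop j c) = replicate k False}"
  let ?U = "\<Union>j\<in>{0..L - k}. ?B j"
  have S: "{c. length c = L \<and> hw c = w \<and> no_zero_run k c} = ?A - ?U"
    using assms by (auto simp: no_zero_run_iff)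
  have "card ?U \<le> (L - k + 1) * ((L - k) choose w)"
  proof -
    have "card ?U \<le> (\<Sum>j\<in>{0..L - k}. card (?B j))"
      by (rule card_UN_le) simp
    also have "\<dots> \<le> (\<Sum>j\<in>{0..L - k}. (L - k) choose w)"
      using assms by (intro sum_mono card_zero_run_at_le) simp
    finally show ?thesis
      by simp
  qed
  then have "(L choose w) - (L - k + 1) * ((L - k) choose w) \<le> card ?A - card ?U"
    unfolding card_words_of_weight by (rule diff_le_mono2)
  also have "\<dots> \<le> card (?A - ?U)"
    by (intro diff_card_le_card_Diff finite_UN_I finite_atLeastAtMost finite_words_of_length)
  finally show ?thesis
    by (simp only: S)
qed

lemma card_C4:
  assumes "k + 2 \<le> n" "2 \<le> n div 2"
  shows "card (C4 n k)
         = card {c :: bool list. length c = n - k - 2 \<and> hw c = n div 2 - 2 \<and> no_zero_run k c}"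
proof -
  let ?S = "{c :: bool list. length c = n - k - 2 \<and> hw c = n div 2 - 2 \<and> no_zero_run k c}"
  have "C4 n k = (\<lambda>c. replicate k False @ [True] @ c @ [True]) ` ?S"
    using assms unfolding C4_def by force
  moreover have "inj_on (\<lambda>c. replicate k False @ [True] @ c @ [True]) ?S"
    by (rule inj_onI) simp
  ultimately show ?thesis
    by (simp add: card_image)
qed

lemma binomial_pred_double_le:
  assumes "0 < w" "n \<le> 2 * w"
  shows "2 * ((n - 1) choose w) \<le> n choose w"
proof (cases "n = 0")
  case False
  have "n * (2 * ((n - 1) choose w)) = 2 * (n - w) * (n choose w)"
    using binomial_absorb_comp[of n w] by simp
  also have "\<dots> \<le> n * (n choose w)"
    using assms by (intro mult_right_mono) auto
  finally show ?thesis
    using False by simp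
qed (use assms in simp)

lemma binomial_diff_mult_power_le:
  assumes "0 < w" "L \<le> 2 * w"
  shows "((L - j) choose w) * 2 ^ j \<le> L choose w"
proof (induction j)
  case (Suc j)
  have "((L - Suc j) choose w) * 2 ^ Suc j = 2 * ((L - j - 1) choose w) * 2 ^ j"
    by simp
  also have "\<dots> \<le> ((L - j) choose w) * 2 ^ j"
    using assms binomial_pred_double_le[of w "L - j"] by simp
  finally show ?case
    using Suc.IH by linarith
qed simp

lemma card_no_zero_run_ge_fraction:
  assumes "k \<le> L" "0 < w" "L \<le> 2 * w"
  shows "real (L choose w) * (1 - real (L - k + 1) / 2 ^ k)
         \<le> real (card {c :: bool list. length c = L \<and> hw c = w \<and> no_zero_run k c})"
proof -
  have "real (((L - k) choose w) * 2 ^ k) \<le> real (L choose w)"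
    using binomial_diff_mult_power_le[OF assms(2,3), of k] by (simp only: of_nat_le_iff)
  then have "real ((L - k) choose w) \<le> real (L choose w) / 2 ^ k"
    by (simp add: pos_le_divide_eq)
  then have "real (L - k + 1) * real ((L - k) choose w) \<le> real (L - k + 1) * (real (L choose w) / 2 ^ k)"
    by (rule mult_left_mono) simp
  moreover have "C * (1 - r / 2 ^ k) \<le> C - r * X" if "r * X \<le> r * (C / 2 ^ k)" for C r X :: real
    using that by (simp add: algebra_simps)
  ultimately have "real (L choose w) * (1 - real (L - k + 1) / 2 ^ k)
             \<le> real (L choose w) - real ((L - k + 1) * ((L - k) choose w))"
    unfolding of_nat_mult by blast
  also have "\<dots> \<le> real ((L choose w) - (L - k + 1) * ((L - k) choose w))"
    by (simp add: of_nat_diff_real)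
  also have "\<dots> \<le> real (card {c :: bool list. length c = L \<and> hw c = w \<and> no_zero_run k c})"
    using card_no_zero_run_ge[OF assms(1)] by (simp only: of_nat_le_iff)
  finally show ?thesis .
qed

lemma card_C4_ge:
  assumes "even n" "2 \<le> k" "2 * k + 2 \<le> n"
  shows "real ((n - k - 2) choose (n div 2 - 2)) * (1 - real n / 2 ^ k) \<le> real (card (C4 n k))"
proof -
  have "real ((n - k - 2) choose (n div 2 - 2)) * (1 - real n / 2 ^ k)
        \<le> real ((n - k - 2) choose (n div 2 - 2)) * (1 - real (n - k - 2 - k + 1) / 2 ^ k)"
    using assms by (intro mult_left_mono diff_left_mono divide_right_mono) (auto simp: of_nat_diff)
  also have "\<dots> \<le> real (card (C4 n k))"
    using assms card_no_zero_run_ge_fraction[of k "n - k - 2" "n div 2 - 2"] card_C4[of k n]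
    by auto
  finally show ?thesis .
qed

section \<open>Asymptotic density\<close>

lemma central_binomial_tendsto:
  "(\<lambda>n. real ((2 * n) choose n) * sqrt (real n) / 4 ^ n) \<longlonglongrightarrow> 1 / sqrt pi"
proof -
  have lim: "(\<lambda>n. inverse (Gamma_series' (1/2) n)) \<longlonglongrightarrow> inverse (Gamma (1/2 :: real))"
    by (intro tendsto_inverse Gamma_series'_LIMSEQ) (simp add: Gamma_one_half_real)
  have eq: "inverse (Gamma_series' (1/2) n) = real ((2 * n) choose n) * sqrt (real n) / 4 ^ n"
    if "0 < n" for n
  proof -
    have "fact (2 * n) = (4::real) ^ n * pochhammer (1/2) n * fact n"
      using fact_double[of n] by (simp add: power_mult)
    then have "pochhammer (1/2) n = real ((2 * n) choose n) * fact n / 4 ^ n"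
      by (simp add: binomial_fact field_simps)
    moreover have "exp (1/2 * ln (real n)) = sqrt (real n)"
      using that by (simp add: ln_sqrt[symmetric])
    moreover have "(fact n :: real) = real n * fact (n - 1)"
      using that by (simp add: fact_reduce)
    moreover have "real n / sqrt (real n) = sqrt (real n)"
      by (rule real_div_sqrt) simp
    ultimately show ?thesis
      using that by (simp add: Gamma_series'_def field_simps)
  qed
  have "eventually (\<lambda>n. inverse (Gamma_series' (1/2) n)
          = real ((2 * n) choose n) * sqrt (real n) / 4 ^ n) sequentially"
    by (rule eventually_mono[OF eventually_gt_at_top[of 0] eq])
  from Lim_transform_eventually[OF lim this] show ?thesis
    by (simp add: Gamma_one_half_real inverse_eq_divide)
qed

lemma binomial_shift_ge:
  fixes z d e :: nat
  assumes "0 < z + d" "e \<le> d"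
  shows "real ((2 * z) choose z) * ((2 * z + d) / (z + d)) ^ e \<le> real ((2 * z + e) choose z)"
  using assms(2)
proof (induction e)
  case (Suc e)
  define n where "n = 2 * z + Suc e"
  let ?q = "(2 * real z + real d) / (real z + real d)"
  have "n - z = z + Suc e"
    by (simp add: n_def)
  with binomial_absorb_comp[of n z] have "(z + Suc e) * (n choose z) = n * ((n - 1) choose z)"
    by simp
  then have "real (z + Suc e) * real (n choose z) = real n * real ((n - 1) choose z)"
    by (metis of_nat_mult)
  then have ratio: "real (n choose z) = real n / real (z + Suc e) * real ((n - 1) choose z)"
    by (simp add: field_simps)
  have "(2 * real z + real d) * (real z + real (Suc e)) \<le> real n * (real z + real d)"
    using mult_left_mono[of "1 + real e" "real d" "real z"] Suc.prems
    by (simp add: n_def algebra_simps)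
  moreover have "0 < real z + real d"
    using assms(1) by linarith
  ultimately have "?q * real (z + Suc e) \<le> real n"
    by (simp add: pos_divide_le_eq add_ac)
  then have "?q \<le> real n / real (z + Suc e)"
    by (simp add: pos_le_divide_eq)
  then have "?q * (real ((2 * z) choose z) * ?q ^ e) \<le> real n / real (z + Suc e) * real ((n - 1) choose z)"
    using Suc by (intro mult_mono) (auto simp: n_def)
  then show ?case
    unfolding ratio[symmetric] by (simp only: n_def power_Suc mult_ac of_nat_add of_nat_mult of_nat_numeral)
qed simp

lemma binomial_near_central_ge:
  fixes z d :: nat
  assumes "0 < z + d"
  shows "real ((2 * z) choose z) * 2 ^ d * (1 - real d ^ 2 / (2 * (real z + real d)))
         \<le> real ((2 * z + d) choose z)"
proof -
  define x where "x = - real d / (2 * (real z + real d))"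
  have pos: "0 < real z + real d"
    using assms by linarith
  have "1 - real d ^ 2 / (2 * (real z + real d)) \<le> (1 + x) ^ d"
    using Bernoulli_inequality[of x d] pos by (simp add: x_def power2_eq_square field_simps)
  moreover have "2 * (1 + x) = (2 * real z + real d) / (real z + real d)"
    using pos by (simp add: x_def field_simps)
  ultimately have "real ((2 * z) choose z) * 2 ^ d * (1 - real d ^ 2 / (2 * (real z + real d)))
        \<le> real ((2 * z) choose z) * ((2 * real z + real d) / (real z + real d)) ^ d"
    by (metis mult_left_mono mult.assoc of_nat_0_le_iff power_mult_distrib zero_le_numeral zero_le_power)
  also have "\<dots> \<le> real ((2 * z + d) choose z)"
    using binomial_shift_ge[OF assms order_refl] by simp
  finally show ?thesis .
qed

definition C4_density :: "nat \<Rightarrow> nat \<Rightarrow> real" where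
  "C4_density a m = real (card (C4 (2 ^ m) (m + a))) / (2 ^ 2 ^ m / (real (2 ^ m) * sqrt (real (2 ^ m))))"

text \<open>The three non-constant factors of the bound tend to \<open>1/\<surd>\<pi>\<close>, \<open>1\<close> and \<open>\<surd>2\<close>.\<close>
definition C4_density_bound :: "nat \<Rightarrow> nat \<Rightarrow> real" where
  "C4_density_bound a m =
     (let z = 2 ^ m div 2 - (m + a); d = m + a - 2
      in real ((2 * z) choose z) * sqrt (real z) / 4 ^ z * (1 - real d ^ 2 / (2 * (real z + real d)))
           * (1 - 1 / 2 ^ a) * sqrt (2 ^ m / real z) / 2 ^ (a + 2))"

lemma eventually_linear_lt_power_of_two:
  "eventually (\<lambda>m. 4 * (m + a + 2) < (2::nat) ^ m) sequentially"
proof -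
  have "eventually (\<lambda>m::nat. 4 * (real m + real a + 2) < 2 ^ m) sequentially"
    by real_asymp
  then show ?thesis
  proof (rule eventually_mono)
    fix m :: nat assume "4 * (real m + real a + 2) < 2 ^ m"
    then have "real (4 * (m + a + 2)) < real ((2::nat) ^ m)"
      by simp
    then show "4 * (m + a + 2) < (2::nat) ^ m"
      by (simp only: of_nat_less_iff)
  qed
qed

lemma C4_power_of_two_parameters:
  assumes "1 \<le> a" and "4 * (m + a + 2) < 2 ^ m"
  defines "n \<equiv> (2::nat) ^ m" and "k \<equiv> m + a" and "z \<equiv> 2 ^ m div 2 - (m + a)" and "d \<equiv> m + a - 2"
  shows "even n" "2 \<le> k" "2 * k + 2 \<le> n" "0 < z"
    "n - k - 2 = 2 * z + d" "n div 2 - 2 = z + d" "2 * z + d + k + 2 = n"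
proof -
  obtain j where m: "m = Suc j"
    using assms(2) by (cases m) auto
  define H where "H = (2::nat) ^ j"
  have "n = 2 * H" "z = H - k" "d = k - 2" "4 * (k + 2) < 2 * H" "2 \<le> k"
    using assms(1,2) by (simp_all add: m n_def H_def z_def d_def k_def)
  then show "even n" "2 \<le> k" "2 * k + 2 \<le> n" "0 < z"
    "n - k - 2 = 2 * z + d" "n div 2 - 2 = z + d" "2 * z + d + k + 2 = n"
    by auto
qed

lemma card_C4_power_of_two_ge:
  assumes "1 \<le> a" and "4 * (m + a + 2) < 2 ^ m"
  defines "z \<equiv> 2 ^ m div 2 - (m + a)" and "d \<equiv> m + a - 2"
  shows "real ((2 * z) choose z) * 2 ^ d * (1 - real d ^ 2 / (2 * (real z + real d))) * (1 - 1 / 2 ^ a)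
         \<le> real (card (C4 (2 ^ m) (m + a)))"
proof -
  note params = C4_power_of_two_parameters[OF assms(1,2), folded z_def d_def]
  have "real (2 ^ m) / 2 ^ (m + a) = 1 / (2::real) ^ a"
    by (simp add: power_add)
  moreover have "(2 * z + d) choose (z + d) = (2 * z + d) choose z"
    by (subst binomial_symmetric) auto
  ultimately have "real ((2 * z + d) choose z) * (1 - 1 / 2 ^ a) \<le> real (card (C4 (2 ^ m) (m + a)))"
    using card_C4_ge[OF params(1-3)] unfolding params(5,6) by simp
  moreover have "real ((2 * z) choose z) * 2 ^ d * (1 - real d ^ 2 / (2 * (real z + real d)))
      \<le> real ((2 * z + d) choose z)"
    by (rule binomial_near_central_ge) (simp add: params)
  moreover have "0 \<le> 1 - 1 / (2::real) ^ a"
    by simp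
  ultimately show ?thesis
    by (meson mult_right_mono order_trans)
qed

lemma C4_density_ge:
  assumes "1 \<le> a" and "4 * (m + a + 2) < 2 ^ m"
  shows "C4_density_bound a m \<le> C4_density a m"
proof -
  define n z d where "n = (2::nat) ^ m" and "z = 2 ^ m div 2 - (m + a)" and "d = m + a - 2"
  define B c where "B = 1 - real d ^ 2 / (2 * (real z + real d))" and "c = 1 - 1 / (2::real) ^ a"
  note params = C4_power_of_two_parameters[OF assms, folded n_def z_def d_def]
  have "(2::real) ^ n = 2 ^ (2 * z + d + (m + a) + 2)"
    by (simp only: params(7))
  then have "(2::real) ^ n = 4 ^ z * 2 ^ d * real n * 2 ^ (a + 2)"
    by (simp add: n_def power_add power_mult)
  moreover have "sqrt (real n / real z) = sqrt (real n) / sqrt (real z)"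
    by (rule real_sqrt_divide)
  ultimately have "real ((2 * z) choose z) * sqrt (real z) / 4 ^ z * B * c * sqrt (real n / real z) / 2 ^ (a + 2)
      = real ((2 * z) choose z) * 2 ^ d * B * c * (real n * sqrt (real n) / 2 ^ n)"
    using params(4) by (simp add: field_simps)
  moreover have "C4_density_bound a m
      = real ((2 * z) choose z) * sqrt (real z) / 4 ^ z * B * c * sqrt (real n / real z) / 2 ^ (a + 2)"
    unfolding C4_density_bound_def Let_def z_def[symmetric] d_def[symmetric] by (simp add: B_def c_def n_def)
  ultimately have "C4_density_bound a m
      = real ((2 * z) choose z) * 2 ^ d * B * c * (real n * sqrt (real n) / 2 ^ n)"
    by simp
  also have "\<dots> \<le> real (card (C4 n (m + a))) * (real n * sqrt (real n) / 2 ^ n)"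
    using card_C4_power_of_two_ge[OF assms] unfolding B_def c_def n_def z_def d_def
    by (rule mult_right_mono) simp
  finally show ?thesis
    by (simp add: C4_density_def n_def)
qed

lemma C4_density_constant_eq:
  "1 / sqrt pi * (1 - 1 / 2 ^ a) * sqrt 2 / 2 ^ (a + 2) = (2 ^ a - 1) / (2 ^ (2*a+1) * sqrt (2 * pi))"
proof -
  have sqrt2: "sqrt 2 / 4 = 1 / (2 * sqrt (2::real))"
    by (simp add: field_simps)
  have pow: "(2::real) ^ (2 * a + 1) = 2 ^ a * 2 ^ a * 2"
    by (simp only: mult_2 power_add power_one_right)
  have "1 / sqrt pi * (1 - 1 / 2 ^ a) * sqrt 2 / 2 ^ (a + 2)
      = (2 ^ a - 1) / (2 ^ a * 2 ^ a) * (sqrt 2 / 4) / sqrt pi"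
    by (simp add: power_add field_simps)
  also have "\<dots> = (2 ^ a - 1) / (2 ^ (2*a+1) * sqrt (2 * pi))"
    unfolding sqrt2 pow by (simp add: real_sqrt_mult)
  finally show ?thesis .
qed

lemma C4_density_bound_tendsto:
  "C4_density_bound a \<longlonglongrightarrow> (2 ^ a - 1) / (2 ^ (2*a+1) * sqrt (2 * pi))"
proof -
  define z where "z m = 2 ^ m div 2 - (m + a)" for m :: nat
  define d where "d m = m + a - 2" for m :: nat
  have z_eq: "eventually (\<lambda>m. real (z m) = 2 ^ m / 2 - real m - real a) sequentially"
    using eventually_linear_lt_power_of_two[of a]
  proof (rule eventually_mono)
    fix m :: nat assume large: "4 * (m + a + 2) < 2 ^ m"
    then obtain j where m: "m = Suc j"
      by (cases m) auto
    with large have "m + a \<le> 2 ^ m div 2" "real (2 ^ m div 2 :: nat) = 2 ^ m / 2"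
      by simp_all
    then show "real (z m) = 2 ^ m / 2 - real m - real a"
      by (simp add: z_def of_nat_diff)
  qed
  have d_eq: "eventually (\<lambda>m. real (d m) = real m + real a - 2) sequentially"
    using eventually_ge_at_top[of 2] by (rule eventually_mono) (simp add: d_def of_nat_diff)
  have "filterlim (\<lambda>m::nat. 2 ^ m / 2 - real m - real a) at_top sequentially"
    by real_asymp
  then have "filterlim (\<lambda>m. real (z m)) at_top sequentially"
    using filterlim_cong[OF refl refl z_eq] by simp
  then have "filterlim z at_top sequentially"
    by (simp add: filterlim_sequentially_iff_filterlim_real)
  then have lim1: "(\<lambda>m. real ((2 * z m) choose z m) * sqrt (real (z m)) / 4 ^ z m) \<longlonglongrightarrow> 1 / sqrt pi"
    using filterlim_compose[OF central_binomial_tendsto] by blast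
  have "(\<lambda>m::nat. 1 - (real m + real a - 2) ^ 2 / (2 * (2 ^ m / 2 - 2))) \<longlonglongrightarrow> (1::real)"
    by real_asymp
  then have lim2: "(\<lambda>m. 1 - real (d m) ^ 2 / (2 * (real (z m) + real (d m)))) \<longlonglongrightarrow> 1"
    by (rule Lim_transform_eventually) (use z_eq d_eq in \<open>eventually_elim, simp\<close>)
  have "(\<lambda>m::nat. 2 ^ m / (2 ^ m / 2 - real m - real a)) \<longlonglongrightarrow> (2::real)"
    by real_asymp
  then have "(\<lambda>m::nat. sqrt (2 ^ m / (2 ^ m / 2 - real m - real a))) \<longlonglongrightarrow> sqrt 2"
    by (rule tendsto_real_sqrt)
  then have lim3: "(\<lambda>m. sqrt (2 ^ m / real (z m))) \<longlonglongrightarrow> sqrt 2"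
    by (rule Lim_transform_eventually) (use z_eq in \<open>eventually_elim, simp\<close>)
  have "C4_density_bound a \<longlonglongrightarrow> 1 / sqrt pi * 1 * (1 - 1 / 2 ^ a) * sqrt 2 / 2 ^ (a + 2)"
    unfolding C4_density_bound_def Let_def z_def[symmetric] d_def[symmetric]
    by (rule tendsto_divide[OF tendsto_mult[OF tendsto_mult[OF tendsto_mult[OF lim1 lim2] tendsto_const] lim3]
          tendsto_const]) simp
  then show ?thesis
    by (simp only: mult_1_right C4_density_constant_eq)
qed

lemma C4_density_liminf_ge:
  assumes "1 \<le> a"
  shows "liminf (\<lambda>m. ereal (C4_density a m)) \<ge> ereal ((2 ^ a - 1) / (2 ^ (2*a+1) * sqrt (2 * pi)))"
proof -
  have "liminf (\<lambda>m. ereal (C4_density_bound a m)) = ereal ((2 ^ a - 1) / (2 ^ (2*a+1) * sqrt (2 * pi)))"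
    using C4_density_bound_tendsto[of a] by (intro lim_imp_Liminf tendsto_ereal) simp_all
  moreover have "eventually (\<lambda>m. ereal (C4_density_bound a m) \<le> ereal (C4_density a m)) sequentially"
    using eventually_linear_lt_power_of_two[of a]
    by (rule eventually_mono) (simp only: ereal_less_eq(3) C4_density_ge[OF assms])
  then have "liminf (\<lambda>m. ereal (C4_density_bound a m)) \<le> liminf (\<lambda>m. ereal (C4_density a m))"
    by (rule Liminf_mono)
  ultimately show ?thesis
    by simp
qed

theorem theorem8:
  fixes n k :: nat
  assumes "even n" and "1 \<le> k" and "k \<le> n div 2"
  shows "balanced_MU n (C4 n k) \<and>
    (\<forall>a::nat. 1 \<le> a \<longrightarrow>
       liminf (\<lambda>m::nat. ereal (real (card (C4 (2^m) (m + a))) /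
                 ((2::real) ^ (2^m) / (real (2^m) * sqrt (real (2^m))))))
       \<ge> ereal ((2 ^ a - 1) / (2 ^ (2*a+1) * sqrt (2 * pi))))"
proof (intro conjI allI impI)
  show "balanced_MU n (C4 n k)"
    unfolding balanced_MU_def using MU_C4[OF assms(2)] balanced_C4[OF assms(1)] by blast
next
  fix a :: nat
  assume "1 \<le> a"
  then show "liminf (\<lambda>m::nat. ereal (real (card (C4 (2^m) (m + a))) /
                 ((2::real) ^ (2^m) / (real (2^m) * sqrt (real (2^m))))))
       \<ge> ereal ((2 ^ a - 1) / (2 ^ (2*a+1) * sqrt (2 * pi)))"
    using C4_density_liminf_ge unfolding C4_density_def by blast
qed

end
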